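(* Let $\langle W,\mathcal{N},V\rangle$ be an nIML1-F1-model. For every formula $\varphi$ and every $w\in W$: if $w\Vdash\nabla\varphi$, then $u\Vdash\nabla\varphi$ for every $u\in\bigcap\mathcal{N}_w$.
   Context: Formulas are built from a denumerable set $PV$ of propositional variables and $\bot$ using binary $\land,\lor,\rightarrow$ and unary $\Delta,\nabla$. An nIML1-model is a triple $\langle W,\mathcal{N},V\rangle$ with $W\neq\emptyset$, $\mathcal{N}:W\to P(P(W))$ satisfying for all $w$: (a) $w\in\bigcap\mathcal{N}_w$; (b) $\bigcap\mathcal{N}_w\in\mathcal{N}_w$; (c) $u\in\bigcap\mathcal{N}_w\Rightarrow\bigcap\mathcal{N}_u\subseteq\bigcap\mathcal{N}_w$; (d) $\bigcap\mathcal{N}_w\subseteq X\subseteq\bigcup\mathcal{N}_w\Rightarrow X\in\mathcal{N}_w$; (e) $u\in\bigcap\mathcal{N}_w\Rightarrow\bigcup\mathcal{N}_u\subseteq\bigcup\mathcal{N}_w$ ($\bigcap\mathcal{N}_w$, $\bigcup\mathcal{N}_w$ the intersection and union of the family $\mathcal{N}_w$), and $V:PV\to P(W)$ with $w\in V(q)\Rightarrow\bigcap\mathcal{N}_w\subseteq V(q)$. It is an nIML1-F1-model if moreover (F1): whenever $u\in\bigcap\mathcal{N}_w$ and $v\in\bigcup\mathcal{N}_w$, there is $z\in W$ with $z\in\bigcup\mathcal{N}_u$ and $z\in\bigcap\mathcal{N}_v$. Forcing: atoms via $V$; $\bot$ never; $\land,\lor$ pointwise; $w\Vdash\varphi\rightarrow\psi$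 iff every $v\in\bigcap\mathcal{N}_w$ has $v\nVdash\varphi$ or $v\Vdash\psi$; $w\Vdash\Delta\varphi$ iff every $v\in\bigcup\mathcal{N}_w$ has $v\Vdash\varphi$; $w\Vdash\nabla\varphi$ iff some $v\in\bigcup\mathcal{N}_w$ has $v\Vdash\varphi$. *)

theory Defs
  imports Main
begin

datatype 'v fm =
    Var 'v
  | Bot
  | And "'v fm" "'v fm"
  | Or "'v fm" "'v fm"
  | Imp "'v fm" "'v fm"
  | Delta "'v fm"
  | Nabla "'v fm"

definition nIML1_model :: "'w set \<Rightarrow> ('w \<Rightarrow> 'w set set) \<Rightarrow> ('v \<Rightarrow> 'w set) \<Rightarrow> bool" where
  "nIML1_model W N V \<longleftrightarrow>
     W \<noteq> {} \<and>
     (\<forall>w\<in>W. N w \<subseteq> Pow W) \<and>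
     (\<forall>q. V q \<subseteq> W) \<and>
     (\<forall>w\<in>W. w \<in> \<Inter>(N w)) \<and>
     (\<forall>w\<in>W. \<Inter>(N w) \<in> N w) \<and>
     (\<forall>w\<in>W. \<forall>u\<in>\<Inter>(N w). \<Inter>(N u) \<subseteq> \<Inter>(N w)) \<and>
     (\<forall>w\<in>W. \<forall>X. \<Inter>(N w) \<subseteq> X \<and> X \<subseteq> \<Union>(N w) \<longrightarrow> X \<in> N w) \<and>
     (\<forall>w\<in>W. \<forall>u\<in>\<Inter>(N w). \<Union>(N u) \<subseteq> \<Union>(N w)) \<and>
     (\<forall>q. \<forall>w\<in>V q. \<Inter>(N w) \<subseteq> V q)"

definition nIML1_F1_model :: "'w set \<Rightarrow> ('w \<Rightarrow> 'w set set) \<Rightarrow> ('v \<Rightarrow> 'w set) \<Rightarrow> bool" where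
  "nIML1_F1_model W N V \<longleftrightarrow>
     nIML1_model W N V \<and>
     (\<forall>w\<in>W. \<forall>u\<in>\<Inter>(N w). \<forall>v\<in>\<Union>(N w). \<exists>z\<in>W. z \<in> \<Union>(N u) \<and> z \<in> \<Inter>(N v))"

fun forces :: "('w \<Rightarrow> 'w set set) \<Rightarrow> ('v \<Rightarrow> 'w set) \<Rightarrow> 'w \<Rightarrow> 'v fm \<Rightarrow> bool" where
  "forces N V w (Var q) = (w \<in> V q)"
| "forces N V w Bot = False"
| "forces N V w (And a b) = (forces N V w a \<and> forces N V w b)"
| "forces N V w (Or a b) = (forces N V w a \<or> forces N V w b)"
| "forces N V w (Imp a b) = (\<forall>v\<in>\<Inter>(N w). \<not> forces N V v a \<or> forces N V v b)"
| "forces N V w (Delta a) = (\<forall>v\<in>\<Union>(N w). forces N V v a)"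
| "forces N V w (Nabla a) = (\<exists>v\<in>\<Union>(N w). forces N V v a)"

end

theory Submission
  imports Defs
begin

text \<open>Forcing is persistent along the core \<open>\<Inter>(N w)\<close>: atoms by the condition on \<open>V\<close>,
  implications by (c), \<open>\<Delta>\<close> by (e). For \<open>\<nabla>\<phi>\<close>, a witness \<open>v\<close> in \<open>\<Union>(N w)\<close> is replaced by the
  point \<open>z\<close> given by (F1), which lies in \<open>\<Union>(N u)\<close> and in the core of \<open>v\<close>, so by induction
  \<open>z\<close> still forces \<open>\<phi>\<close>.\<close>

lemma nIML1_F1_model_imp_nIML1_model:
  "nIML1_F1_model W N V \<Longrightarrow> nIML1_model W N V"
  unfolding nIML1_F1_model_def by simp

lemma nIML1_model_Union_subset:
  assumes "nIML1_model W N V" "w \<in> W"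
  shows "\<Union>(N w) \<subseteq> W"
proof -
  have "N w \<subseteq> Pow W"
    using assms unfolding nIML1_model_def by simp
  then show ?thesis by blast
qed

lemma nIML1_model_core_mono:
  "\<lbrakk>nIML1_model W N V; w \<in> W; u \<in> \<Inter>(N w)\<rbrakk> \<Longrightarrow> \<Inter>(N u) \<subseteq> \<Inter>(N w)"
  unfolding nIML1_model_def by simp

lemma nIML1_model_Union_mono:
  "\<lbrakk>nIML1_model W N V; w \<in> W; u \<in> \<Inter>(N w)\<rbrakk> \<Longrightarrow> \<Union>(N u) \<subseteq> \<Union>(N w)"
  unfolding nIML1_model_def by simp

lemma nIML1_model_valuation_persistent:
  "\<lbrakk>nIML1_model W N V; w \<in> V q\<rbrakk> \<Longrightarrow> \<Inter>(N w) \<subseteq> V q"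
  unfolding nIML1_model_def by simp

lemma nIML1_F1_modelE:
  assumes "nIML1_F1_model W N V" "w \<in> W" "u \<in> \<Inter>(N w)" "v \<in> \<Union>(N w)"
  obtains z where "z \<in> W" "z \<in> \<Union>(N u)" "z \<in> \<Inter>(N v)"
proof -
  have "\<forall>w\<in>W. \<forall>u\<in>\<Inter>(N w). \<forall>v\<in>\<Union>(N w). \<exists>z\<in>W. z \<in> \<Union>(N u) \<and> z \<in> \<Inter>(N v)"
    using assms(1) unfolding nIML1_F1_model_def by (rule conjunct2)
  with assms(2-4) show thesis
    using that by blast
qed

lemma forces_persistent:
  assumes F1: "nIML1_F1_model W N V"
    and "w \<in> W" "u \<in> \<Inter>(N w)" "forces N V w \<phi>"
  shows "forces N V u \<phi>"
proof -
  have M: "nIML1_model W N V" using F1 by (rule nIML1_F1_model_imp_nIML1_model)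
  show ?thesis
    using assms(2-)
  proof (induction \<phi> arbitrary: w u)
    case (Var q)
    have "\<Inter>(N w) \<subseteq> V q"
      using M Var.prems(3) by (simp add: nIML1_model_valuation_persistent)
    with Var.prems(2) show ?case by auto
  next
    case Bot
    then show ?case by simp
  next
    case (And a b)
    then show ?case by (simp add: And.IH[OF And.prems(1,2)])
  next
    case (Or a b)
    then show ?case by (auto simp add: Or.IH[OF Or.prems(1,2)])
  next
    case (Imp a b)
    have "\<Inter>(N u) \<subseteq> \<Inter>(N w)"
      by (rule nIML1_model_core_mono[OF M Imp.prems(1,2)])
    with Imp.prems(3) show ?case by auto
  next
    case (Delta a)
    have "\<Union>(N u) \<subseteq> \<Union>(N w)"
      by (rule nIML1_model_Union_mono[OF M Delta.prems(1,2)])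
    with Delta.prems(3) show ?case by auto
  next
    case (Nabla a)
    obtain v where v: "v \<in> \<Union>(N w)" "forces N V v a"
      using Nabla.prems(3) by auto
    have "v \<in> W"
      using nIML1_model_Union_subset[OF M Nabla.prems(1)] v(1) ..
    obtain z where z: "z \<in> \<Union>(N u)" "z \<in> \<Inter>(N v)"
      using nIML1_F1_modelE[OF F1 Nabla.prems(1,2) v(1)] by blast
    have "forces N V z a" using Nabla.IH[OF \<open>v \<in> W\<close> z(2) v(2)] .
    with z(1) show ?case by auto
  qed
qed

theorem lemma9p1:
  fixes W :: "'w set" and N :: "'w \<Rightarrow> 'w set set" and V :: "'v \<Rightarrow> 'w set"
    and \<phi> :: "'v fm" and w u :: 'w
  assumes "nIML1_F1_model W N V"
    and "w \<in> W"
    and "forces N V w (Nabla \<phi>)"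
    and "u \<in> \<Inter>(N w)"
  shows "forces N V u (Nabla \<phi>)"
  using forces_persistent[OF assms(1,2,4,3)] .

end
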